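(* Assume $S\neq\emptyset$ and let $k\ge\max(1,k_1,\dots,k_m)$. If $\mathcal{Q}_k(\tilde G)$ is closed in $\mathbb{R}[\tilde X]_{2k}$, then $\widetilde{\mathrm{TH}}_k(\tilde G)=\overline{\Omega_k(\tilde G)}$.
   Context: $X=(X_1,\dots,X_n)$, $\tilde X=(X_0,X_1,\dots,X_n)$, $\|\cdot\|_2$ Euclidean norm; $\mathbb{R}[\tilde X]_{2k}$ is the space of polynomials of degree at most $2k$. For $f\in\mathbb{R}[X]$ of degree $d$, its homogenization is $\tilde f(\tilde X)=X_0^df(X/X_0)\in\mathbb{R}[\tilde X]$. Fix $g_1,\dots,g_m\in\mathbb{R}[X]$ and $S=\{x\in\mathbb{R}^n:g_1(x)\ge0,\dots,g_m(x)\ge0\}$. For a finite set $H=\{h_1,\dots,h_r\}$ of polynomials, the $k$-th quadratic module is $\mathcal{Q}_k(H)=\{\sum_{j=0}^r\sigma_jh_j:h_0=1,\ \sigma_j\text{ sums of squares of polynomials},\ \deg(\sigma_jh_j)\le2k\}$. Let $\tilde G=\{\tilde g_1,\dots,\tilde g_m,X_0,\|\tilde X\|_2^2-1,1-\|\tilde X\|_2^2\}$. Let $\mathcal{P}[\tilde X]_1$ be the set of linear forms (homogeneous of degree one) in $\tilde X$ together with $0$. The modified theta body is $\widetilde{\mathrm{TH}}_k(\tilde G)=\{x\in\mathbb{R}^n:\tilde l(1,x)\ge0\ \forall\tilde l\in\mathcal{Q}_k(\tilde G)\cap\mathcal{P}[\tilde X]_1\}$. Moments: for $y=(y_\alpha)_{\alpha\in\mathbb{N}^{n+1},|\alpha|\le2k}$,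 the Riesz functional is $L_y(\sum_\alpha q_\alpha\tilde X^\alpha)=\sum_\alpha q_\alpha y_\alpha$; the moment matrix $M_k(y)$ is indexed by $\alpha,\beta\in\mathbb{N}^{n+1}$, $|\alpha|,|\beta|\le k$, with entries $y_{\alpha+\beta}$; for $p=\sum_\beta p_\beta\tilde X^\beta$ with $d_p=\lceil\deg p/2\rceil\le k$, the localizing matrix $M_{k-d_p}(py)$ is indexed by $|\alpha|,|\gamma|\le k-d_p$ with entries $\sum_\beta p_\beta y_{\alpha+\gamma+\beta}$. With $k_j=\lceil\deg g_j/2\rceil$, the modified Lasserre relaxation is $\Omega_k(\tilde G)=\{x\in\mathbb{R}^n:\exists y=(y_\alpha)_{|\alpha|\le2k}\text{ with }L_y(X_0)=1,\ L_y(X_i)=x_i\ (i=1,\dots,n),\ M_{k-1}(X_0y)\succeq0,\ M_{k-1}((\|\tilde X\|_2^2-1)y)=0,\ M_k(y)\succeq0,\ M_{k-k_j}(\tilde g_jy)\succeq0\ (j=1,\dots,m)\}$. Overline denotes closure. *)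

theory Defs
  imports "HOL-Analysis.Analysis" "HOL-Library.Poly_Mapping"
begin

text \<open>For the homogenized variables
  X0, X1, ..., Xn we use the variable type 'n option, where None is X0 and Some i
  is Xi (i ranging over the finite type 'n, so R^n is real^'n).\<close>

type_synonym 'v mpoly = "('v \<Rightarrow>\<^sub>0 nat) \<Rightarrow>\<^sub>0 real"

definition mdeg :: "('v \<Rightarrow>\<^sub>0 nat) \<Rightarrow> nat" where
  "mdeg a = (\<Sum>i\<in>Poly_Mapping.keys a. Poly_Mapping.lookup a i)"

definition pdeg :: "'v mpoly \<Rightarrow> nat" where
  "pdeg p = Max (insert 0 (mdeg ` Poly_Mapping.keys p))"

definition pvar :: "'v \<Rightarrow> 'v mpoly" where
  "pvar i = Poly_Mapping.single (Poly_Mapping.single i 1) 1"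

definition peval :: "'v mpoly \<Rightarrow> ('v \<Rightarrow> real) \<Rightarrow> real" where
  "peval p z = (\<Sum>a\<in>Poly_Mapping.keys p. Poly_Mapping.lookup p a * (\<Prod>i\<in>Poly_Mapping.keys a. z i ^ Poly_Mapping.lookup a i))"

definition hpt :: "real^'n \<Rightarrow> 'n option \<Rightarrow> real" where
  "hpt x = (\<lambda>i. case i of None \<Rightarrow> 1 | Some j \<Rightarrow> x $ j)"

definition in_X :: "'n option mpoly \<Rightarrow> bool" where
  "in_X p \<longleftrightarrow> (\<forall>a\<in>Poly_Mapping.keys p. None \<notin> Poly_Mapping.keys a)"

text \<open>Homogenization: tilde f = X0^d f(X/X0), d = deg f, coefficientwise.\<close>
definition homog :: "'n option mpoly \<Rightarrow> 'n option mpoly" where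
  "homog f = (\<Sum>a\<in>Poly_Mapping.keys f. Poly_Mapping.single
      (a + Poly_Mapping.single None (pdeg f - mdeg a)) (Poly_Mapping.lookup f a))"

definition sqnorm :: "'n::finite option mpoly" where
  "sqnorm = (\<Sum>i\<in>UNIV. pvar i * pvar i)"

definition sos :: "'v mpoly \<Rightarrow> bool" where
  "sos s \<longleftrightarrow> (\<exists>qs. s = sum_list (map (\<lambda>q. q * q) qs))"

definition qmodule :: "nat \<Rightarrow> 'v mpoly list \<Rightarrow> 'v mpoly set" where
  "qmodule k H = {(\<Sum>j<length (1 # H). \<sigma> j * ((1 # H) ! j)) | \<sigma>.
      \<forall>j<length (1 # H). sos (\<sigma> j) \<and> pdeg (\<sigma> j * ((1 # H) ! j)) \<le> 2 * k}"

definition polys_deg :: "nat \<Rightarrow> 'v mpoly set" where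
  "polys_deg d = {p. pdeg p \<le> d}"

text \<open>Closedness of a set C inside the finite-dimensional space R[tilde X]_d, for its
  (unique Hausdorff vector space, i.e. coefficientwise) topology, stated sequentially.\<close>
definition closed_in_polys :: "nat \<Rightarrow> 'v mpoly set \<Rightarrow> bool" where
  "closed_in_polys d C \<longleftrightarrow> C \<subseteq> polys_deg d \<and>
     (\<forall>ps q. (\<forall>j. ps j \<in> C) \<and> q \<in> polys_deg d \<and>
        (\<forall>a. (\<lambda>j. Poly_Mapping.lookup (ps j) a) \<longlonglongrightarrow> Poly_Mapping.lookup q a) \<longrightarrow> q \<in> C)"

definition linforms :: "'v mpoly set" where
  "linforms = {l. \<forall>a\<in>Poly_Mapping.keys l. mdeg a = 1}"

definition semialg :: "'n option mpoly list \<Rightarrow> (real^'n) set" where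
  "semialg gs = {x. \<forall>g\<in>set gs. peval g (hpt x) \<ge> 0}"

definition Gtilde :: "'n::finite option mpoly list \<Rightarrow> 'n option mpoly list" where
  "Gtilde gs = map homog gs @ [pvar None, sqnorm - 1, 1 - sqnorm]"

definition modTH :: "nat \<Rightarrow> 'n::finite option mpoly list \<Rightarrow> (real^'n) set" where
  "modTH k G = {x. \<forall>l\<in>qmodule k G \<inter> linforms. peval l (hpt x) \<ge> 0}"

definition riesz :: "(('v \<Rightarrow>\<^sub>0 nat) \<Rightarrow> real) \<Rightarrow> 'v mpoly \<Rightarrow> real" where
  "riesz y p = (\<Sum>a\<in>Poly_Mapping.keys p. Poly_Mapping.lookup p a * y a)"

definition mons :: "nat \<Rightarrow> ('v \<Rightarrow>\<^sub>0 nat) set" where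
  "mons d = {a. mdeg a \<le> d}"

definition locmat :: "'v mpoly \<Rightarrow> (('v \<Rightarrow>\<^sub>0 nat) \<Rightarrow> real) \<Rightarrow> ('v \<Rightarrow>\<^sub>0 nat) \<Rightarrow> ('v \<Rightarrow>\<^sub>0 nat) \<Rightarrow> real" where
  "locmat p y a c = (\<Sum>b\<in>Poly_Mapping.keys p. Poly_Mapping.lookup p b * y (a + c + b))"

definition loc_psd :: "nat \<Rightarrow> 'v mpoly \<Rightarrow> (('v \<Rightarrow>\<^sub>0 nat) \<Rightarrow> real) \<Rightarrow> bool" where
  "loc_psd d p y \<longleftrightarrow> (\<forall>v. 0 \<le> (\<Sum>a\<in>mons d. \<Sum>c\<in>mons d. v a * locmat p y a c * v c))"

definition loc_zero :: "nat \<Rightarrow> 'v mpoly \<Rightarrow> (('v \<Rightarrow>\<^sub>0 nat) \<Rightarrow> real) \<Rightarrow> bool" where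
  "loc_zero d p y \<longleftrightarrow> (\<forall>a\<in>mons d. \<forall>c\<in>mons d. locmat p y a c = 0)"

definition kdeg :: "'v mpoly \<Rightarrow> nat" where
  "kdeg g = (pdeg g + 1) div 2"

definition Omega :: "nat \<Rightarrow> 'n::finite option mpoly list \<Rightarrow> (real^'n) set" where
  "Omega k gs = {x. \<exists>y. riesz y (pvar None) = 1
      \<and> (\<forall>i. riesz y (pvar (Some i)) = x $ i)
      \<and> loc_psd (k - 1) (pvar None) y
      \<and> loc_zero (k - 1) (sqnorm - 1) y
      \<and> loc_psd k 1 y
      \<and> (\<forall>g\<in>set gs. loc_psd (k - kdeg g) (homog g) y)}"

end

theory Submission
  imports Defs
begin

text \<open>Both inclusions are duality arguments. If \<open>x \<in> \<Omega>\<^sub>k\<close> with moment sequence \<open>y\<close>, then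
  \<open>L\<^sub>y \<ge> 0\<close> on \<open>Q\<^sub>k\<close>: the leading terms of squares cannot cancel, so a summand \<open>\<sigma>\<^sub>j h\<^sub>j\<close>
  of degree at most \<open>2k\<close> splits into terms \<open>q\<^sup>2 h\<^sub>j\<close> with \<open>2 deg q + deg h\<^sub>j \<le> 2k\<close>, on which the
  localizing matrices are positive semidefinite (zero for the sphere). As \<open>L\<^sub>y(l) = l(1, x)\<close> for
  linear forms and the theta body is closed, \<open>\<Omega>\<^sub>k\<close> and its closure lie in it.

  Conversely, a point \<open>x\<close> outside the closure of the convex set \<open>\<Omega>\<^sub>k\<close> is separated from it
  by a linear form \<open>l\<close> with \<open>l(1, x) < 0\<close>, so \<open>l \<notin> Q\<^sub>k\<close>. Since \<open>Q\<^sub>k\<close> is a closed convex cone,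
  some \<open>y\<close> has \<open>L\<^sub>y \<ge> 0\<close> on \<open>Q\<^sub>k\<close> and \<open>L\<^sub>y(l) < 0\<close>. Nonnegativity on \<open>Q\<^sub>k\<close> gives all
  conditions of \<open>\<Omega>\<^sub>k\<close> except \<open>L\<^sub>y(X\<^sub>0) = 1\<close>; adding a small multiple of the moment sequence
  of a point of \<open>S\<close> lifted to the sphere (where \<open>X\<^sub>0 > 0\<close>) and normalizing yields points of
  \<open>\<Omega>\<^sub>k\<close>, on which \<open>l \<ge> 0\<close>; in the limit \<open>L\<^sub>y(l) \<ge> 0\<close>, a contradiction.\<close>

abbreviation lookup :: "('a \<Rightarrow>\<^sub>0 'b::zero) \<Rightarrow> 'a \<Rightarrow> 'b" where
  "lookup \<equiv> Poly_Mapping.lookup"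

abbreviation keys :: "('a \<Rightarrow>\<^sub>0 'b::zero) \<Rightarrow> 'a set" where
  "keys \<equiv> Poly_Mapping.keys"

abbreviation single :: "'a \<Rightarrow> 'b::zero \<Rightarrow> 'a \<Rightarrow>\<^sub>0 'b" where
  "single \<equiv> Poly_Mapping.single"

lemma lookup_single_if: "lookup (single k v) k' = (if k = k' then v else 0)"
  by (simp add: lookup_single when_def)

lemma mdeg_eq_sum_superset: "finite S \<Longrightarrow> keys a \<subseteq> S \<Longrightarrow> mdeg a = (\<Sum>i\<in>S. lookup a i)"
  unfolding mdeg_def by (rule sum.mono_neutral_left) (auto simp: in_keys_iff)

lemma mdeg_add: "mdeg (a + b) = mdeg a + mdeg b"
proof -
  let ?S = "keys a \<union> keys b"
  have "mdeg (a + b) = (\<Sum>i\<in>?S. lookup (a + b) i)"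
    by (rule mdeg_eq_sum_superset) (use keys_add[of a b] in auto)
  also have "\<dots> = (\<Sum>i\<in>?S. lookup a i) + (\<Sum>i\<in>?S. lookup b i)"
    by (simp add: lookup_add sum.distrib)
  also have "\<dots> = mdeg a + mdeg b"
    by (subst (1 2) mdeg_eq_sum_superset[of ?S]) auto
  finally show ?thesis .
qed

lemma mdeg_single [simp]: "mdeg (single i n) = n"
  by (simp add: mdeg_def)

lemma mdeg_zero [simp]: "mdeg 0 = 0"
  by (simp add: mdeg_def)

lemma lookup_le_mdeg: "lookup a i \<le> mdeg a"
proof (cases "i \<in> keys a")
  case True
  then show ?thesis unfolding mdeg_def by (intro member_le_sum) auto
qed (simp add: in_keys_iff)

lemma mdeg_eq_1_imp_single:
  fixes a :: "'v::finite \<Rightarrow>\<^sub>0 nat"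
  assumes "mdeg a = 1"
  obtains i where "a = single i 1"
proof -
  have total: "mdeg a = (\<Sum>j\<in>UNIV. lookup a j)" by (rule mdeg_eq_sum_superset) auto
  have "a \<noteq> 0" using assms by auto
  then obtain i where i: "lookup a i \<noteq> 0" by (metis lookup_zero poly_mapping_eqI)
  with lookup_le_mdeg[of a i] assms have i1: "lookup a i = 1" by simp
  have "lookup a j = 0" if "j \<noteq> i" for j
  proof -
    have "(\<Sum>l\<in>{i, j}. lookup a l) \<le> (\<Sum>l\<in>UNIV. lookup a l)" by (rule sum_mono2) auto
    then show ?thesis using that i1 assms total by simp
  qed
  then have "a = single i 1" using i1 by (intro poly_mapping_eqI) (auto simp: lookup_single_if)
  then show thesis by (rule that)
qed

lemma pdeg_le_iff: "pdeg p \<le> d \<longleftrightarrow> (\<forall>a\<in>keys p. mdeg a \<le> d)"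
  unfolding pdeg_def by (subst Max_le_iff) auto

lemma mdeg_le_pdeg: "a \<in> keys p \<Longrightarrow> mdeg a \<le> pdeg p"
  using pdeg_le_iff by blast

lemma pdeg_le_iff_keys_subset_mons: "pdeg p \<le> d \<longleftrightarrow> keys p \<subseteq> mons d"
  by (auto simp: pdeg_le_iff mons_def)

lemma exists_key_mdeg_eq_pdeg:
  assumes "f \<noteq> 0"
  obtains a where "a \<in> keys f" "mdeg a = pdeg f"
proof -
  have ne: "keys f \<noteq> {}" using assms by simp
  then have "pdeg f = Max (mdeg ` keys f)" unfolding pdeg_def by (simp add: Max_insert)
  moreover have "Max (mdeg ` keys f) \<in> mdeg ` keys f" using ne by simp
  ultimately show thesis using that by auto
qed

lemma pdeg_add_le: "pdeg (p + q) \<le> max (pdeg p) (pdeg q)"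
  unfolding pdeg_le_iff
proof
  fix a assume "a \<in> keys (p + q)"
  then have "a \<in> keys p \<or> a \<in> keys q" using keys_add[of p q] by auto
  then show "mdeg a \<le> max (pdeg p) (pdeg q)" using mdeg_le_pdeg by fastforce
qed

lemma pdeg_uminus [simp]: "pdeg (- p) = pdeg p"
  unfolding pdeg_def by simp

lemma pdeg_mult_le: "pdeg (p * q) \<le> pdeg p + pdeg q"
  unfolding pdeg_le_iff
proof
  fix a assume "a \<in> keys (p * q)"
  then obtain b c where "a = b + c" "b \<in> keys p" "c \<in> keys q" using keys_mult by blast
  then show "mdeg a \<le> pdeg p + pdeg q" by (simp add: mdeg_add add_mono mdeg_le_pdeg)
qed

lemma pdeg_zero [simp]: "pdeg 0 = 0"
  by (simp add: pdeg_def)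

lemma pdeg_one [simp]: "pdeg 1 = 0"
  by (simp add: pdeg_def)

lemma pdeg_single_le: "pdeg (single a c) \<le> mdeg a"
  by (simp add: pdeg_le_iff)

lemma pdeg_const_mult_le:
  fixes p :: "'v mpoly"
  shows "pdeg (single 0 r * p) \<le> pdeg p"
  using pdeg_mult_le[of "single 0 r" p] pdeg_single_le[of "0 :: 'v \<Rightarrow>\<^sub>0 nat" r] by simp

lemma pdeg_pvar: "pdeg (pvar i) = 1"
proof -
  have "single i 1 \<in> keys (pvar i)" by (simp add: pvar_def)
  then have "1 \<le> pdeg (pvar i)" using mdeg_le_pdeg by fastforce
  moreover have "pdeg (pvar i) \<le> 1" using pdeg_single_le[of "single i 1" 1] by (simp add: pvar_def)
  ultimately show ?thesis by simp
qed

lemma finite_mons: "finite (mons d :: ('v::finite \<Rightarrow>\<^sub>0 nat) set)"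
proof -
  have "lookup ` (mons d :: ('v \<Rightarrow>\<^sub>0 nat) set) \<subseteq> PiE UNIV (\<lambda>i. {..d})"
    using lookup_le_mdeg by (fastforce simp: mons_def intro: le_trans)
  then have "finite (lookup ` (mons d :: ('v \<Rightarrow>\<^sub>0 nat) set))"
    by (rule finite_subset) (simp add: finite_PiE)
  moreover have "inj_on lookup (mons d :: ('v \<Rightarrow>\<^sub>0 nat) set)"
    by (rule inj_onI, rule poly_mapping_eqI) simp
  ultimately show ?thesis by (rule finite_imageD)
qed

lemma poly_mapping_sum_single: "finite A \<Longrightarrow> keys p \<subseteq> A \<Longrightarrow> p = (\<Sum>a\<in>A. single a (lookup p a))"
  by (rule poly_mapping_eqI) (auto simp: lookup_sum lookup_single_if in_keys_iff)

lemma keys_sum_single_subset: "keys (\<Sum>a\<in>A. single a (v a)) \<subseteq> A"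
  using keys_sum[of "\<lambda>a. single a (v a)" A] by auto

lemma lookup_sum_single: "finite A \<Longrightarrow> lookup (\<Sum>a\<in>A. single a (v a)) b = (if b \<in> A then v b else 0)"
  by (simp add: lookup_sum lookup_single_if)

lemma riesz_eq_sum_superset: "finite A \<Longrightarrow> keys p \<subseteq> A \<Longrightarrow> riesz y p = (\<Sum>a\<in>A. lookup p a * y a)"
  unfolding riesz_def by (rule sum.mono_neutral_left) (auto simp: in_keys_iff)

lemma riesz_add: "riesz y (p + q) = riesz y p + riesz y q"
proof -
  let ?S = "keys p \<union> keys q"
  have "riesz y (p + q) = (\<Sum>a\<in>?S. lookup (p + q) a * y a)"
    by (rule riesz_eq_sum_superset) (use keys_add[of p q] in auto)
  also have "\<dots> = (\<Sum>a\<in>?S. lookup p a * y a) + (\<Sum>a\<in>?S. lookup q a * y a)"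
    by (simp add: lookup_add sum.distrib algebra_simps)
  also have "\<dots> = riesz y p + riesz y q"
    by (subst (1 2) riesz_eq_sum_superset[of ?S]) auto
  finally show ?thesis .
qed

lemma riesz_zero [simp]: "riesz y 0 = 0"
  by (simp add: riesz_def)

lemma riesz_sum: "riesz y (sum f A) = (\<Sum>a\<in>A. riesz y (f a))"
  by (induction A rule: infinite_finite_induct) (auto simp: riesz_add)

lemma riesz_sum_list: "riesz y (sum_list xs) = sum_list (map (riesz y) xs)"
  by (induction xs) (auto simp: riesz_add)

lemma riesz_single: "riesz y (single m c) = c * y m"
  by (simp add: riesz_def)

lemma riesz_pvar: "riesz y (pvar i) = y (single i 1)"
  by (simp add: pvar_def riesz_single)

lemma riesz_uminus: "riesz y (- p) = - riesz y p"
  by (simp add: riesz_def sum_negf)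

lemma riesz_linear_combination:
  "riesz (\<lambda>a. u * y a + v * z a) p = u * riesz y p + v * riesz z p"
  by (simp add: riesz_def sum.distrib sum_distrib_left algebra_simps)

definition quad_form :: "'a set \<Rightarrow> ('a \<Rightarrow> 'a \<Rightarrow> real) \<Rightarrow> ('a \<Rightarrow> real) \<Rightarrow> real" where
  "quad_form A M v = (\<Sum>a\<in>A. \<Sum>c\<in>A. v a * M a c * v c)"

lemma loc_psd_iff: "loc_psd d h y \<longleftrightarrow> (\<forall>v. 0 \<le> quad_form (mons d) (locmat h y) v)"
  by (simp add: loc_psd_def quad_form_def)

lemma quad_form_linear_combination:
  "quad_form A (\<lambda>a c. u * M a c + v * M' a c) w = u * quad_form A M w + v * quad_form A M' w"
  unfolding quad_form_def by (simp add: sum.distrib sum_distrib_left algebra_simps)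

lemma quad_form_rank_one:
  "quad_form A (\<lambda>a c. z a * z c * t) v = (\<Sum>a\<in>A. v a * z a)\<^sup>2 * t"
  unfolding quad_form_def power2_eq_square sum_distrib_left sum_distrib_right
  by (simp add: mult_ac)

lemma quad_form_indicator:
  assumes "finite A" "a \<in> A" "c \<in> A"
  shows "quad_form A M (\<lambda>x. if x = a \<or> x = c then 1 else 0) =
    (if a = c then M a a else M a a + M a c + M c a + M c c)"
proof -
  have "quad_form A M (\<lambda>x. if x = a \<or> x = c then 1 else 0) =
      (\<Sum>x\<in>{a, c}. \<Sum>w\<in>{a, c}. M x w)"
    unfolding quad_form_def using assms
    by (intro sum.mono_neutral_cong_right ballI) (auto intro: sum.mono_neutral_cong_right)
  then show ?thesis by (cases "a = c") (simp_all add: algebra_simps)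
qed

lemma symmetric_quad_form_eq_0:
  assumes "finite A" "\<And>a c. M a c = M c a" "\<And>v. quad_form A M v = 0" "a \<in> A" "c \<in> A"
  shows "M a c = 0"
proof -
  have diag: "M b b = 0" if "b \<in> A" for b
    using assms(3)[of "\<lambda>x. if x = b \<or> x = b then 1 else 0"] quad_form_indicator[OF assms(1) that that]
    by simp
  show ?thesis
  proof (cases "a = c")
    case False
    then show ?thesis
      using assms(3)[of "\<lambda>x. if x = a \<or> x = c then 1 else 0"] quad_form_indicator[OF assms(1,4,5)]
        diag[OF assms(4)] diag[OF assms(5)] assms(2)[of a c] by simp
  qed (use diag assms(4) in simp)
qed

lemma locmat_symmetric: "locmat h y a c = locmat h y c a"
  unfolding locmat_def by (simp add: add.commute)

lemma locmat_uminus: "locmat (- h) y a c = - locmat h y a c"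
  unfolding locmat_def by (simp add: sum_negf)

lemma locmat_linear_combination:
  "locmat h (\<lambda>a. u * y a + v * z a) a c = u * locmat h y a c + v * locmat h z a c"
  unfolding locmat_def by (simp add: sum.distrib sum_distrib_left algebra_simps)

lemma riesz_square_mult:
  assumes "finite A" "keys q \<subseteq> A"
  shows "riesz y (q * q * h) = quad_form A (locmat h y) (lookup q)"
proof -
  have "q * q * h = (\<Sum>a\<in>A. single a (lookup q a)) * (\<Sum>c\<in>A. single c (lookup q c)) *
      (\<Sum>b\<in>keys h. single b (lookup h b))"
    using poly_mapping_sum_single[OF assms] poly_mapping_sum_single[of "keys h" h] by simp
  also have "\<dots> = (\<Sum>a\<in>A. \<Sum>c\<in>A. \<Sum>b\<in>keys h. single (a + c + b) (lookup q a * lookup q c * lookup h b))"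
    by (simp add: sum_distrib_left sum_distrib_right mult_single sum.swap[of _ "keys h"])
      (rule sum.cong[OF refl], rule sum.swap)
  finally show ?thesis
    unfolding quad_form_def locmat_def
    by (simp add: riesz_sum riesz_single sum_distrib_left sum_distrib_right mult_ac)
qed

lemma riesz_square_mult_nonneg:
  fixes q :: "'v::finite mpoly"
  assumes "loc_psd d h y" "pdeg q \<le> d"
  shows "0 \<le> riesz y (q * q * h)"
  using assms riesz_square_mult[OF finite_mons, of q d y h]
  by (simp add: pdeg_le_iff_keys_subset_mons loc_psd_iff)

lemma riesz_square_mult_eq_0:
  fixes q :: "'v::finite mpoly"
  assumes "loc_zero d h y" "pdeg q \<le> d"
  shows "riesz y (q * q * h) = 0"
  using assms riesz_square_mult[OF finite_mons, of q d y h]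
  by (simp add: pdeg_le_iff_keys_subset_mons loc_zero_def quad_form_def)

section \<open>Degree of a weighted sum of squares\<close>

text \<open>A graded monomial order: exponent vectors are mapped additively and injectively into
  \<open>nat \<Rightarrow>\<^sub>0 nat\<close>, total degree in coordinate 0 and exponent of \<open>i\<close> in coordinate \<open>Suc (e i)\<close>,
  and compared lexicographically there.\<close>

definition graded_code :: "('v \<Rightarrow> nat) \<Rightarrow> ('v::finite \<Rightarrow>\<^sub>0 nat) \<Rightarrow> (nat \<Rightarrow>\<^sub>0 nat)" where
  "graded_code e a = single 0 (mdeg a) + (\<Sum>i\<in>UNIV. single (Suc (e i)) (lookup a i))"

lemma graded_code_add: "graded_code e (a + b) = graded_code e a + graded_code e b"
  unfolding graded_code_def mdeg_add lookup_add single_add sum.distrib by (simp only: ac_simps)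

lemma lookup_graded_code_Suc: "inj e \<Longrightarrow> lookup (graded_code e a) (Suc (e i)) = lookup a i"
  unfolding graded_code_def by (simp add: lookup_add lookup_sum lookup_single_if inj_eq)

lemma graded_code_inj: "inj e \<Longrightarrow> graded_code e a = graded_code e b \<Longrightarrow> a = b"
  by (metis lookup_graded_code_Suc poly_mapping_eqI)

lemma mdeg_le_of_graded_code_le: "graded_code e a \<le> graded_code e b \<Longrightarrow> mdeg a \<le> mdeg b"
proof (rule ccontr)
  assume "graded_code e a \<le> graded_code e b" "\<not> mdeg a \<le> mdeg b"
  moreover have "mdeg b < mdeg a \<Longrightarrow> graded_code e b < graded_code e a"
    unfolding less_poly_mapping.rep_eq less_fun_def
    by (rule exI[of _ 0]) (simp add: graded_code_def lookup_add lookup_sum lookup_single_if)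
  ultimately show False by simp
qed

lemma exists_graded_code_max:
  assumes "finite K" "K \<noteq> {}"
  shows "\<exists>M\<in>K. \<forall>b\<in>K. graded_code e b \<le> graded_code e M"
proof -
  let ?m = "Max (graded_code e ` K)"
  have "?m \<in> graded_code e ` K" using assms by simp
  then obtain M where "M \<in> K" "graded_code e M = ?m" by auto
  moreover have "graded_code e b \<le> ?m" if "b \<in> K" for b using assms(1) that by (intro Max_ge) auto
  ultimately show ?thesis by (intro bexI[of _ M]) auto
qed

lemma lookup_mult_leading:
  assumes e: "inj e"
    and p: "\<And>b. b \<in> keys p \<Longrightarrow> graded_code e b \<le> graded_code e A"
    and q: "\<And>c. c \<in> keys q \<Longrightarrow> graded_code e c \<le> graded_code e B"
  shows "lookup (p * q) (A + B) = lookup p A * lookup q B"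
proof -
  have "p * q = (\<Sum>b\<in>keys p. single b (lookup p b)) * (\<Sum>c\<in>keys q. single c (lookup q c))"
    using poly_mapping_sum_single[of "keys p" p] poly_mapping_sum_single[of "keys q" q] by simp
  also have "\<dots> = (\<Sum>b\<in>keys p. \<Sum>c\<in>keys q. single (b + c) (lookup p b * lookup q c))"
    by (simp add: sum_distrib_left sum_distrib_right mult_single) (rule sum.swap)
  finally have "lookup (p * q) (A + B) =
      lookup (\<Sum>b\<in>keys p. \<Sum>c\<in>keys q. single (b + c) (lookup p b * lookup q c)) (A + B)"
    by simp
  also have "\<dots> = (\<Sum>b\<in>keys p. \<Sum>c\<in>keys q. if b = A \<and> c = B then lookup p b * lookup q c else 0)"
    unfolding lookup_sum
  proof (intro sum.cong refl)
    fix b c assume bc: "b \<in> keys p" "c \<in> keys q"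
    have "b = A" if "b + c = A + B"
    proof -
      have "graded_code e b + graded_code e c = graded_code e A + graded_code e B"
        using that by (metis graded_code_add)
      then have "graded_code e b = graded_code e A"
        using p[OF bc(1)] q[OF bc(2)] add_less_le_mono[of "graded_code e b" "graded_code e A"] by force
      then show ?thesis using graded_code_inj[OF e] by blast
    qed
    then show "lookup (single (b + c) (lookup p b * lookup q c)) (A + B) =
        (if b = A \<and> c = B then lookup p b * lookup q c else 0)"
      by (auto simp: lookup_single_if)
  qed
  also have "\<dots> = (\<Sum>b\<in>keys p. if b = A then (\<Sum>c\<in>keys q. if c = B then lookup p b * lookup q c else 0) else 0)"
    by (intro sum.cong refl) auto
  also have "\<dots> = lookup p A * lookup q B"
    by (simp add: in_keys_iff)
  finally show ?thesis .
qed

lemma graded_code_keys_sos: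
  assumes "\<And>q b. q \<in> set qs \<Longrightarrow> b \<in> keys q \<Longrightarrow> graded_code e b \<le> graded_code e M"
    and "b \<in> keys (sum_list (map (\<lambda>q. q * q) qs))"
  shows "graded_code e b \<le> graded_code e (M + M)"
  using assms
proof (induction qs arbitrary: b)
  case (Cons q qs)
  then consider "b \<in> keys (q * q)" | "b \<in> keys (sum_list (map (\<lambda>q. q * q) qs))"
    using keys_add by fastforce
  then show ?case
  proof cases
    case 1
    then obtain c d where "b = c + d" "c \<in> keys q" "d \<in> keys q" using keys_mult by blast
    moreover from this have "graded_code e c \<le> graded_code e M" "graded_code e d \<le> graded_code e M"
      using Cons.prems(1) by auto
    ultimately show ?thesis by (simp add: graded_code_add add_mono)
  qed (use Cons in auto)
qed simp

lemma lookup_sos_leading: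
  fixes qs :: "'v::finite mpoly list"
  assumes "inj e" "\<And>q b. q \<in> set qs \<Longrightarrow> b \<in> keys q \<Longrightarrow> graded_code e b \<le> graded_code e M"
  shows "lookup (sum_list (map (\<lambda>q. q * q) qs)) (M + M) = (\<Sum>q\<leftarrow>qs. (lookup q M)\<^sup>2)"
  using assms(2)
proof (induction qs)
  case (Cons q qs)
  have "\<And>b. b \<in> keys q \<Longrightarrow> graded_code e b \<le> graded_code e M" using Cons.prems by auto
  then have "lookup (q * q) (M + M) = (lookup q M)\<^sup>2"
    using lookup_mult_leading[OF assms(1), of q M q M] by (simp add: power2_eq_square)
  moreover have "lookup (\<Sum>q\<leftarrow>qs. q * q) (M + M) = (\<Sum>q\<leftarrow>qs. (lookup q M)\<^sup>2)"
    by (rule Cons.IH) (use Cons.prems in auto)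
  ultimately show ?case by (simp add: lookup_add)
qed simp

text \<open>The leading terms of the squares cannot cancel: at the largest leading monomial \<open>M\<close> of
  the \<open>q\<^sub>i\<close>, the coefficient of \<open>\<Sum> q\<^sub>i\<^sup>2\<close> at \<open>2M\<close> is a sum of squares of leading coefficients.\<close>

lemma pdeg_sos_mult_ge:
  fixes qs :: "'v::finite mpoly list"
  assumes "q \<in> set qs" "q \<noteq> 0" "h \<noteq> 0"
  shows "2 * pdeg q + pdeg h \<le> pdeg (sum_list (map (\<lambda>q. q * q) qs) * h)"
proof -
  obtain e :: "'v \<Rightarrow> nat" where e: "inj e" using finite_imp_inj_to_nat_seg[of "UNIV :: 'v set"] by auto
  define \<sigma> where "\<sigma> = sum_list (map (\<lambda>q. q * q) qs)"
  have "(\<Union>q\<in>set qs. keys q) \<noteq> {}" using assms(1,2) by auto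
  then obtain M where M: "M \<in> (\<Union>q\<in>set qs. keys q)"
    and M_max: "\<And>q b. q \<in> set qs \<Longrightarrow> b \<in> keys q \<Longrightarrow> graded_code e b \<le> graded_code e M"
    using exists_graded_code_max[of "\<Union>q\<in>set qs. keys q" e] by auto
  have "keys h \<noteq> {}" using assms(3) by simp
  then obtain Mh where Mh: "Mh \<in> keys h" "\<forall>b\<in>keys h. graded_code e b \<le> graded_code e Mh"
    using exists_graded_code_max[of "keys h" e] by auto
  obtain q' where q': "q' \<in> set qs" "M \<in> keys q'" using M by auto
  have "0 < (lookup q' M)\<^sup>2" using q'(2) by (simp add: in_keys_iff)
  also have "\<dots> \<le> (\<Sum>q\<leftarrow>qs. (lookup q M)\<^sup>2)"
    using q'(1) by (intro member_le_sum_list) auto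
  also have "\<dots> = lookup \<sigma> (M + M)"
    unfolding \<sigma>_def using lookup_sos_leading[OF e M_max] by simp
  finally have "lookup \<sigma> (M + M) \<noteq> 0" by simp
  moreover have "lookup (\<sigma> * h) (M + M + Mh) = lookup \<sigma> (M + M) * lookup h Mh"
    unfolding \<sigma>_def using graded_code_keys_sos[OF M_max] Mh(2)
    by (intro lookup_mult_leading[OF e]) auto
  ultimately have "M + M + Mh \<in> keys (\<sigma> * h)"
    using Mh(1) by (simp add: in_keys_iff)
  then have "mdeg (M + M + Mh) \<le> pdeg (\<sigma> * h)"
    by (rule mdeg_le_pdeg)
  moreover have "pdeg q \<le> mdeg M"
    unfolding pdeg_le_iff using M_max[OF assms(1)] mdeg_le_of_graded_code_le by blast
  moreover have "pdeg h \<le> mdeg Mh"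
    unfolding pdeg_le_iff using Mh(2) mdeg_le_of_graded_code_le by blast
  ultimately show ?thesis unfolding mdeg_add \<sigma>_def by linarith
qed

definition mon_eval :: "('v::finite \<Rightarrow>\<^sub>0 nat) \<Rightarrow> ('v \<Rightarrow> real) \<Rightarrow> real" where
  "mon_eval a z = (\<Prod>i\<in>UNIV. z i ^ lookup a i)"

lemma peval_eq_riesz: "peval p z = riesz (\<lambda>a. mon_eval a z) p"
  unfolding peval_def riesz_def mon_eval_def
  by (intro sum.cong refl arg_cong2[where f = "(*)"] prod.mono_neutral_left) (auto simp: in_keys_iff)

lemma mon_eval_add: "mon_eval (a + b) z = mon_eval a z * mon_eval b z"
  unfolding mon_eval_def by (simp add: lookup_add power_add prod.distrib)

lemma mon_eval_single: "mon_eval (single i n) z = z i ^ n"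
proof -
  have "mon_eval (single i n) z = (\<Prod>j\<in>UNIV. if i = j then z j ^ n else 1)"
    unfolding mon_eval_def by (intro prod.cong refl) (simp add: lookup_single_if)
  then show ?thesis by simp
qed

lemma mon_eval_scale: "mon_eval a (\<lambda>i. c * z i) = c ^ mdeg a * mon_eval a z"
  using mdeg_eq_sum_superset[of UNIV a]
  unfolding mon_eval_def by (simp add: power_mult_distrib prod.distrib power_sum)

lemma peval_homogeneous:
  fixes p :: "'v::finite mpoly"
  assumes "\<And>a. a \<in> keys p \<Longrightarrow> mdeg a = d"
  shows "peval p (\<lambda>i. c * z i) = c ^ d * peval p z"
  unfolding peval_eq_riesz riesz_def using assms
  by (simp add: mon_eval_scale sum_distrib_left mult_ac)

lemma peval_one: "peval (1 :: 'v::finite mpoly) z = 1"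
  by (simp add: peval_eq_riesz riesz_def mon_eval_def)

lemma peval_diff:
  fixes p q :: "'v::finite mpoly"
  shows "peval (p - q) z = peval p z - peval q z"
  using riesz_add[of _ p "- q"] by (simp add: peval_eq_riesz riesz_uminus)

lemma peval_pvar: "peval (pvar (i :: 'v::finite)) z = z i"
  by (simp add: peval_eq_riesz riesz_pvar mon_eval_single)

lemma mdeg_keys_homog: "b \<in> keys (homog f) \<Longrightarrow> mdeg b = pdeg f"
  unfolding homog_def using keys_sum mdeg_le_pdeg
  by (fastforce simp: mdeg_add split: if_splits)

lemma pdeg_homog:
  assumes "in_X f"
  shows "pdeg (homog f) = pdeg f"
proof (cases "f = 0")
  case False
  let ?d = "pdeg f"
  obtain a where a: "a \<in> keys f" "mdeg a = ?d" using exists_key_mdeg_eq_pdeg[OF False] by blast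
  have shift_eq: "a' + single None (?d - mdeg a') = a \<longleftrightarrow> a' = a" if "a' \<in> keys f" for a'
  proof
    assume shifted: "a' + single None (?d - mdeg a') = a"
    have "None \<notin> keys a'" "None \<notin> keys a" using assms that a(1) unfolding in_X_def by auto
    then have "?d - mdeg a' = 0"
      using arg_cong[OF shifted, of "\<lambda>m. lookup m None"] by (simp add: lookup_add in_keys_iff)
    with shifted show "a' = a" by simp
  qed (use a in simp)
  have "lookup (homog f) a = lookup f a"
    unfolding homog_def lookup_sum lookup_single_if using a(1) by (simp add: shift_eq)
  then have "a \<in> keys (homog f)" using a(1) by (simp add: in_keys_iff)
  then have "?d \<le> pdeg (homog f)" using mdeg_le_pdeg a(2) by metis
  moreover have "pdeg (homog f) \<le> ?d" unfolding pdeg_le_iff by (auto dest: mdeg_keys_homog)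
  ultimately show ?thesis by simp
qed (simp add: homog_def)

lemma peval_homog_hpt: "peval (homog f) (hpt x) = peval f (hpt x)"
proof -
  have "peval (homog f) (hpt x) =
      (\<Sum>a\<in>keys f. lookup f a * mon_eval (a + single None (pdeg f - mdeg a)) (hpt x))"
    unfolding homog_def peval_eq_riesz by (simp add: riesz_sum riesz_single)
  also have "\<dots> = peval f (hpt x)"
    by (simp add: mon_eval_add mon_eval_single hpt_def peval_eq_riesz riesz_def)
  finally show ?thesis .
qed

lemma sqnorm_eq_sum_single: "sqnorm = (\<Sum>i\<in>UNIV. single (single i 2) 1)"
  unfolding sqnorm_def pvar_def by (simp add: mult_single single_add[symmetric] numeral_2_eq_2)

lemma peval_sqnorm: "peval sqnorm z = (\<Sum>i\<in>UNIV. (z i)\<^sup>2)"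
  by (simp add: sqnorm_eq_sum_single peval_eq_riesz riesz_sum riesz_single mon_eval_single)

lemma pdeg_sqnorm_minus_one: "pdeg ((sqnorm :: 'n::finite option mpoly) - 1) = 2"
proof (rule antisym)
  have "pdeg (sqnorm :: 'n option mpoly) \<le> 2"
    unfolding pdeg_le_iff sqnorm_eq_sum_single
    using keys_sum[of "\<lambda>i. single (single i 2) (1::real)" UNIV] by auto
  then show "pdeg ((sqnorm :: 'n option mpoly) - 1) \<le> 2"
    using pdeg_add_le[of "sqnorm :: 'n option mpoly" "- 1"] by simp
  have "single i (2::nat) = single j 2 \<longleftrightarrow> i = j" for i j :: "'n option"
    by (metis lookup_single_if zero_neq_numeral)
  then have "lookup (sqnorm :: 'n option mpoly) (single None 2) = 1"
    unfolding sqnorm_eq_sum_single lookup_sum lookup_single_if by (simp add: sum.delta sum.delta')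
  moreover have "single None (2::nat) \<noteq> 0" by (metis lookup_single_if lookup_zero zero_neq_numeral)
  ultimately have "lookup ((sqnorm :: 'n option mpoly) - 1) (single None 2) = 1"
    by (simp add: lookup_minus lookup_one when_def)
  then have "single None 2 \<in> keys ((sqnorm :: 'n option mpoly) - 1)" by (simp add: in_keys_iff)
  from mdeg_le_pdeg[OF this] show "2 \<le> pdeg ((sqnorm :: 'n option mpoly) - 1)" by simp
qed

lemma pdeg_one_minus_sqnorm: "pdeg (1 - (sqnorm :: 'n::finite option mpoly)) = 2"
  by (metis minus_diff_eq pdeg_uminus pdeg_sqnorm_minus_one)

lemma sos_zero: "sos 0"
  unfolding sos_def by (rule exI[of _ "[]"]) simp

lemma sos_square: "sos (q * q)"
  unfolding sos_def by (rule exI[of _ "[q]"]) simp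

lemma sos_add:
  assumes "sos a" "sos b"
  shows "sos (a + b)"
proof -
  obtain qa qb where "a = (\<Sum>q\<leftarrow>qa. q * q)" "b = (\<Sum>q\<leftarrow>qb. q * q)"
    using assms unfolding sos_def by blast
  then have "a + b = (\<Sum>q\<leftarrow>qa @ qb. q * q)" by simp
  then show ?thesis unfolding sos_def by blast
qed

lemma sos_const_mult:
  assumes "sos a" "0 \<le> r"
  shows "sos (single 0 r * a :: 'v mpoly)"
proof -
  obtain qs where a: "a = (\<Sum>q\<leftarrow>qs. q * q)" using assms(1) unfolding sos_def by blast
  let ?s = "single 0 (sqrt r) :: 'v mpoly"
  have "single 0 r = ?s * ?s" using assms(2) by (simp add: mult_single)
  then have "single 0 r * a = (\<Sum>q\<leftarrow>map ((*) ?s) qs. q * q)"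
    unfolding a by (induction qs) (simp_all add: algebra_simps)
  then show ?thesis unfolding sos_def by blast
qed

lemma qmoduleI:
  assumes "\<And>j. j < length (1 # G) \<Longrightarrow> sos (\<sigma> j) \<and> pdeg (\<sigma> j * ((1 # G) ! j)) \<le> 2 * k"
  shows "(\<Sum>j<length (1 # G). \<sigma> j * ((1 # G) ! j)) \<in> qmodule k G"
  unfolding qmodule_def using assms by blast

lemma qmoduleE:
  assumes "c \<in> qmodule k G"
  obtains \<sigma> where "c = (\<Sum>j<length (1 # G). \<sigma> j * ((1 # G) ! j))"
    "\<And>j. j < length (1 # G) \<Longrightarrow> sos (\<sigma> j)"
    "\<And>j. j < length (1 # G) \<Longrightarrow> pdeg (\<sigma> j * ((1 # G) ! j)) \<le> 2 * k"
  using assms unfolding qmodule_def by blast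

lemma zero_in_qmodule: "0 \<in> qmodule k G"
  using qmoduleI[of G "\<lambda>_. 0" k] by (simp add: sos_zero)

lemma qmodule_add:
  assumes "c \<in> qmodule k G" "d \<in> qmodule k G"
  shows "c + d \<in> qmodule k G"
proof -
  obtain \<sigma> where
    c: "c = (\<Sum>j<length (1 # G). \<sigma> j * ((1 # G) ! j))"
      "\<And>j. j < length (1 # G) \<Longrightarrow> sos (\<sigma> j)"
      "\<And>j. j < length (1 # G) \<Longrightarrow> pdeg (\<sigma> j * ((1 # G) ! j)) \<le> 2 * k"
    using assms(1) by (rule qmoduleE) blast
  obtain \<tau> where
    d: "d = (\<Sum>j<length (1 # G). \<tau> j * ((1 # G) ! j))"
      "\<And>j. j < length (1 # G) \<Longrightarrow> sos (\<tau> j)"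
      "\<And>j. j < length (1 # G) \<Longrightarrow> pdeg (\<tau> j * ((1 # G) ! j)) \<le> 2 * k"
    using assms(2) by (rule qmoduleE) blast
  have "(\<Sum>j<length (1 # G). (\<sigma> j + \<tau> j) * ((1 # G) ! j)) \<in> qmodule k G"
  proof (rule qmoduleI)
    fix j assume j: "j < length (1 # G)"
    have "max (pdeg (\<sigma> j * ((1 # G) ! j))) (pdeg (\<tau> j * ((1 # G) ! j))) \<le> 2 * k"
      using c(3)[OF j] d(3)[OF j] by simp
    then have "pdeg (\<sigma> j * ((1 # G) ! j) + \<tau> j * ((1 # G) ! j)) \<le> 2 * k"
      by (rule le_trans[OF pdeg_add_le])
    then show "sos (\<sigma> j + \<tau> j) \<and> pdeg ((\<sigma> j + \<tau> j) * ((1 # G) ! j)) \<le> 2 * k"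
      using sos_add[OF c(2)[OF j] d(2)[OF j]] by (simp add: distrib_right)
  qed
  then show ?thesis unfolding c d by (simp add: distrib_right sum.distrib)
qed

lemma qmodule_const_mult:
  assumes "c \<in> qmodule k G" "0 \<le> r"
  shows "single 0 r * c \<in> qmodule k G"
proof -
  obtain \<sigma> where
    c: "c = (\<Sum>j<length (1 # G). \<sigma> j * ((1 # G) ! j))"
      "\<And>j. j < length (1 # G) \<Longrightarrow> sos (\<sigma> j)"
      "\<And>j. j < length (1 # G) \<Longrightarrow> pdeg (\<sigma> j * ((1 # G) ! j)) \<le> 2 * k"
    using assms(1) by (rule qmoduleE) blast
  have "(\<Sum>j<length (1 # G). (single 0 r * \<sigma> j) * ((1 # G) ! j)) \<in> qmodule k G"
  proof (rule qmoduleI)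
    fix j assume j: "j < length (1 # G)"
    have "pdeg (single 0 r * (\<sigma> j * ((1 # G) ! j))) \<le> pdeg (\<sigma> j * ((1 # G) ! j))"
      by (rule pdeg_const_mult_le)
    with c(3)[OF j] sos_const_mult[OF c(2)[OF j] assms(2)]
    show "sos (single 0 r * \<sigma> j) \<and> pdeg (single 0 r * \<sigma> j * ((1 # G) ! j)) \<le> 2 * k"
      by (simp add: mult.assoc)
  qed
  moreover have "single 0 r * c = (\<Sum>j<length (1 # G). (single 0 r * \<sigma> j) * ((1 # G) ! j))"
    unfolding c(1) by (simp only: sum_distrib_left mult.assoc)
  ultimately show ?thesis by simp
qed

lemma square_mult_in_qmodule:
  assumes "h \<in> set (1 # G)" "pdeg (q * q * h) \<le> 2 * k"
  shows "q * q * h \<in> qmodule k G"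
proof -
  obtain j where j: "j < length (1 # G)" "(1 # G) ! j = h"
    using assms(1) unfolding in_set_conv_nth by blast
  let ?\<sigma> = "\<lambda>i. if i = j then q * q else 0"
  have "(\<Sum>i<length (1 # G). ?\<sigma> i * ((1 # G) ! i)) =
      (\<Sum>i<length (1 # G). if i = j then q * q * h else 0)"
    by (intro sum.cong refl) (simp add: j(2))
  also have "\<dots> = q * q * h"
    using j(1) by (subst sum.delta) auto
  finally have "q * q * h = (\<Sum>i<length (1 # G). ?\<sigma> i * ((1 # G) ! i))" ..
  also have "\<dots> \<in> qmodule k G"
    using assms(2) j(2) by (intro qmoduleI) (simp add: sos_square sos_zero)
  finally show ?thesis .
qed

lemma riesz_qmodule_nonneg:
  assumes "\<And>h qs q. h \<in> set (1 # G) \<Longrightarrow> q \<in> set qs \<Longrightarrow>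
      pdeg ((\<Sum>q\<leftarrow>qs. q * q) * h) \<le> 2 * k \<Longrightarrow> 0 \<le> riesz y (q * q * h)"
    and "c \<in> qmodule k G"
  shows "0 \<le> riesz y c"
proof -
  obtain \<sigma> where
    c: "c = (\<Sum>j<length (1 # G). \<sigma> j * ((1 # G) ! j))"
      "\<And>j. j < length (1 # G) \<Longrightarrow> sos (\<sigma> j)"
      "\<And>j. j < length (1 # G) \<Longrightarrow> pdeg (\<sigma> j * ((1 # G) ! j)) \<le> 2 * k"
    using assms(2) by (rule qmoduleE) blast
  have "0 \<le> riesz y (\<sigma> j * ((1 # G) ! j))" if j: "j < length (1 # G)" for j
  proof -
    obtain qs where qs: "\<sigma> j = (\<Sum>q\<leftarrow>qs. q * q)" using c(2)[OF j] unfolding sos_def by blast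
    have "(\<Sum>q\<leftarrow>qs. q * q) * ((1 # G) ! j) = (\<Sum>q\<leftarrow>qs. q * q * ((1 # G) ! j))"
      by (induction qs) (simp_all add: distrib_right)
    then have "riesz y (\<sigma> j * ((1 # G) ! j)) = (\<Sum>q\<leftarrow>qs. riesz y (q * q * ((1 # G) ! j)))"
      unfolding qs by (simp add: riesz_sum_list o_def)
    also have "0 \<le> \<dots>"
    proof (intro sum_list_nonneg)
      have "pdeg ((\<Sum>q\<leftarrow>qs. q * q) * ((1 # G) ! j)) \<le> 2 * k" using c(3)[OF j] qs by simp
      then show "\<And>x. x \<in> set (map (\<lambda>q. riesz y (q * q * (1 # G) ! j)) qs) \<Longrightarrow> 0 \<le> x"
        using assms(1)[OF nth_mem[OF j]] by auto
    qed
    finally show ?thesis .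
  qed
  then show ?thesis unfolding c(1) riesz_sum by (intro sum_nonneg) auto
qed

section \<open>Duality for closed convex cones of polynomials\<close>

lemma nonneg_of_nonneg_perturbations:
  fixes A B :: real
  assumes "\<And>t. 0 < t \<Longrightarrow> t \<le> 1 \<Longrightarrow> 0 \<le> A + t * B"
  shows "0 \<le> A"
proof (rule ccontr)
  assume "\<not> 0 \<le> A"
  define t where "t = min 1 (- A / (\<bar>B\<bar> + 1))"
  have "0 < - A / (\<bar>B\<bar> + 1)" using \<open>\<not> 0 \<le> A\<close> by (intro divide_pos_pos) auto
  then have t: "0 < t" "t \<le> 1" by (auto simp: t_def)
  have "t * (\<bar>B\<bar> + 1) \<le> - A"
    using mult_right_mono[of t "- A / (\<bar>B\<bar> + 1)" "\<bar>B\<bar> + 1"] by (simp add: t_def)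
  then have "t * \<bar>B\<bar> + t \<le> - A" by (simp add: algebra_simps)
  moreover have "t * B \<le> t * \<bar>B\<bar>" using t by (intro mult_left_mono) auto
  ultimately have "A + t * B < 0" using t by linarith
  with assms[OF t] show False by simp
qed

lemma bounded_imp_convergent_subsequence_finite:
  fixes F :: "nat \<Rightarrow> 'a \<Rightarrow> real"
  assumes "finite N" "\<forall>j. \<forall>a\<in>N. \<bar>F j a\<bar> \<le> B"
  shows "\<exists>r L. strict_mono r \<and> (\<forall>a\<in>N. (\<lambda>j. F (r j) a) \<longlonglongrightarrow> L a)"
  using assms
proof (induction N rule: finite_induct)
  case empty
  show ?case using strict_mono_id by blast
next
  case (insert x N)
  then obtain r L where r: "strict_mono r" "\<forall>a\<in>N. (\<lambda>j. F (r j) a) \<longlonglongrightarrow> L a" by auto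
  have "bounded (range (\<lambda>j. F (r j) x))"
    unfolding bounded_iff using insert.prems by auto
  then obtain l s where s: "strict_mono s" "((\<lambda>j. F (r j) x) \<circ> s) \<longlonglongrightarrow> l"
    using bounded_imp_convergent_subsequence by blast
  have "(\<lambda>j. F ((r \<circ> s) j) a) \<longlonglongrightarrow> (L(x := l)) a" if "a \<in> insert x N" for a
  proof (cases "a = x")
    case False
    then have "((\<lambda>j. F (r j) a) \<circ> s) \<longlonglongrightarrow> L a"
      using that r(2) s(1) LIMSEQ_subseq_LIMSEQ by auto
    then show ?thesis using False by (simp add: o_def)
  qed (use s(2) in \<open>simp add: o_def\<close>)
  moreover have "strict_mono (r \<circ> s)" using r(1) s(1) by (rule strict_mono_o)
  ultimately show ?case by blast
qed

lemma closed_in_polys_convergent_subsequence: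
  fixes C :: "'v::finite mpoly set" and cs :: "nat \<Rightarrow> 'v mpoly"
  assumes C: "closed_in_polys d C" and cs: "\<And>j. cs j \<in> C"
    and bounded: "\<And>j a. a \<in> mons d \<Longrightarrow> \<bar>lookup (cs j) a\<bar> \<le> B"
  shows "\<exists>r q. strict_mono r \<and> q \<in> C \<and> (\<forall>a. (\<lambda>j. lookup (cs (r j)) a) \<longlonglongrightarrow> lookup q a)"
proof -
  have "\<exists>r L. strict_mono r \<and> (\<forall>a\<in>mons d. (\<lambda>j. lookup (cs (r j)) a) \<longlonglongrightarrow> L a)"
    using bounded
    by (intro bounded_imp_convergent_subsequence_finite[where F = "\<lambda>j a. lookup (cs j) a"] finite_mons) auto
  then obtain r L where r: "strict_mono r" and L: "\<forall>a\<in>mons d. (\<lambda>j. lookup (cs (r j)) a) \<longlonglongrightarrow> L a"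
    by blast
  define q where "q = (\<Sum>a\<in>mons d. single a (L a))"
  have keys_C: "keys c \<subseteq> mons d" if "c \<in> C" for c
    using C that by (auto simp: closed_in_polys_def polys_deg_def pdeg_le_iff_keys_subset_mons)
  have conv: "(\<lambda>j. lookup (cs (r j)) a) \<longlonglongrightarrow> lookup q a" for a
  proof (cases "a \<in> mons d")
    case False
    then have "lookup (cs (r j)) a = 0" for j using keys_C[OF cs[of "r j"]] by (auto simp: in_keys_iff)
    then show ?thesis using False by (simp add: q_def lookup_sum_single finite_mons)
  qed (use L in \<open>simp add: q_def lookup_sum_single finite_mons\<close>)
  have "pdeg q \<le> d"
    unfolding q_def pdeg_le_iff_keys_subset_mons by (rule keys_sum_single_subset)
  then have "q \<in> C"
    using C cs conv unfolding closed_in_polys_def polys_deg_def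
    by (elim conjE allE[of _ "\<lambda>j. cs (r j)"] allE[of _ q]) auto
  with r conv show ?thesis by blast
qed

lemma abs_lookup_le_of_sum_square_diff_le:
  fixes p c :: "'v::finite mpoly"
  assumes "(\<Sum>a\<in>mons d. (lookup p a - lookup c a)\<^sup>2) \<le> D" "a \<in> mons d"
  shows "\<bar>lookup c a\<bar> \<le> (\<Sum>a\<in>mons d. \<bar>lookup p a\<bar>) + D + 1"
proof -
  have "(lookup p a - lookup c a)\<^sup>2 \<le> D"
    using assms finite_mons by (meson member_le_sum zero_le_power2 order_trans)
  moreover have "\<bar>lookup p a\<bar> \<le> (\<Sum>a\<in>mons d. \<bar>lookup p a\<bar>)"
    by (rule member_le_sum) (use assms(2) finite_mons in auto)
  moreover have "\<bar>lookup c a\<bar> \<le> \<bar>lookup p a\<bar> + \<bar>lookup p a - lookup c a\<bar>"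
    by arith
  moreover have "\<bar>x\<bar> \<le> x\<^sup>2 + 1" for x :: real
    using zero_le_power2[of "\<bar>x\<bar> - 1"] zero_le_power2[of x] by (simp add: power2_diff)
  from this[of "lookup p a - lookup c a"]
  have "\<bar>lookup p a - lookup c a\<bar> \<le> (lookup p a - lookup c a)\<^sup>2 + 1" .
  ultimately show ?thesis by linarith
qed

lemma closed_in_polys_nearest_point:
  fixes C :: "'v::finite mpoly set" and p :: "'v mpoly" and d :: nat
  defines "f \<equiv> \<lambda>c. (\<Sum>a\<in>mons d. (lookup p a - lookup c a)\<^sup>2)"
  assumes C: "closed_in_polys d C" "C \<noteq> {}"
  obtains q where "q \<in> C" "\<And>c. c \<in> C \<Longrightarrow> f q \<le> f c"
proof -
  define m where "m = Inf (f ` C)"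
  have f_nonneg: "0 \<le> f c" for c unfolding f_def by (intro sum_nonneg) auto
  then have bdd: "bdd_below (f ` C)" by (intro bdd_belowI[of _ 0]) auto
  then have m_le: "m \<le> f c" if "c \<in> C" for c unfolding m_def using that by (simp add: cInf_lower)
  have "\<exists>c\<in>C. f c < m + inverse (real (Suc j))" for j
  proof -
    have "Inf (f ` C) < m + inverse (real (Suc j))" unfolding m_def by simp
    then obtain v where "v \<in> f ` C" "v < m + inverse (real (Suc j))"
      using cInf_lessD[of "f ` C"] C(2) by blast
    then show ?thesis by blast
  qed
  then obtain cs where "\<forall>j. cs j \<in> C \<and> f (cs j) < m + inverse (real (Suc j))"
    by metis
  then have cs: "\<And>j. cs j \<in> C" "\<And>j. f (cs j) < m + inverse (real (Suc j))" by auto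
  have "f (cs j) \<le> m + 1" for j
    using cs(2)[of j] inverse_le_1_iff[of "real (Suc j)"] by linarith
  then have "\<bar>lookup (cs j) a\<bar> \<le> (\<Sum>a\<in>mons d. \<bar>lookup p a\<bar>) + (m + 1) + 1" if "a \<in> mons d" for j a
    using that unfolding f_def by (rule abs_lookup_le_of_sum_square_diff_le)
  then have "\<exists>r q. strict_mono r \<and> q \<in> C \<and> (\<forall>a. (\<lambda>j. lookup (cs (r j)) a) \<longlonglongrightarrow> lookup q a)"
    by (rule closed_in_polys_convergent_subsequence[where cs = cs, OF C(1) cs(1)])
  then obtain r q where r: "strict_mono r" and "q \<in> C"
    and conv: "\<And>a. (\<lambda>j. lookup (cs (r j)) a) \<longlonglongrightarrow> lookup q a"
    by blast
  moreover have "f q = m"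
  proof (rule LIMSEQ_unique)
    show "(\<lambda>j. f (cs (r j))) \<longlonglongrightarrow> f q"
      unfolding f_def by (intro tendsto_intros conv)
    have upper: "f (cs (r j)) \<le> m + inverse (real (Suc j))" for j
    proof -
      have "inverse (real (Suc (r j))) \<le> inverse (real (Suc j))"
        using seq_suble[OF r, of j] by (simp add: le_imp_inverse_le)
      then show ?thesis using cs(2)[of "r j"] by linarith
    qed
    show "(\<lambda>j. f (cs (r j))) \<longlonglongrightarrow> m"
    proof (rule tendsto_sandwich[of "\<lambda>j. m" _ _ "\<lambda>j. m + inverse (real (Suc j))"])
      show "\<forall>\<^sub>F j in sequentially. m \<le> f (cs (r j))" using m_le cs(1) by simp
      show "\<forall>\<^sub>F j in sequentially. f (cs (r j)) \<le> m + inverse (real (Suc j))" using upper by simp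
      show "(\<lambda>j. m + inverse (real (Suc j))) \<longlonglongrightarrow> m"
        using tendsto_add[OF tendsto_const LIMSEQ_inverse_real_of_nat, of m] by simp
    qed simp
  qed
  ultimately show thesis using that[of q] m_le by simp
qed

lemma sum_square_diff_expand:
  fixes \<delta> u :: "'a \<Rightarrow> real"
  shows "(\<Sum>a\<in>A. (\<delta> a - t * u a)\<^sup>2) =
    (\<Sum>a\<in>A. (\<delta> a)\<^sup>2) - 2 * t * (\<Sum>a\<in>A. \<delta> a * u a) + t\<^sup>2 * (\<Sum>a\<in>A. (u a)\<^sup>2)"
proof -
  have "(\<Sum>a\<in>A. (\<delta> a - t * u a)\<^sup>2) = (\<Sum>a\<in>A. (\<delta> a)\<^sup>2 - 2 * t * (\<delta> a * u a) + t\<^sup>2 * (u a)\<^sup>2)"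
    by (intro sum.cong refl) (simp add: power2_eq_square algebra_simps)
  then show ?thesis by (simp add: sum.distrib sum_subtractf sum_distrib_left)
qed

lemma inner_nonpos_of_local_min:
  fixes \<delta> u :: "'a \<Rightarrow> real"
  assumes "\<And>t. 0 < t \<Longrightarrow> t \<le> 1 \<Longrightarrow> (\<Sum>a\<in>A. (\<delta> a)\<^sup>2) \<le> (\<Sum>a\<in>A. (\<delta> a - t * u a)\<^sup>2)"
  shows "(\<Sum>a\<in>A. \<delta> a * u a) \<le> 0"
proof -
  have "0 \<le> - 2 * (\<Sum>a\<in>A. \<delta> a * u a)"
  proof (rule nonneg_of_nonneg_perturbations[where B = "\<Sum>a\<in>A. (u a)\<^sup>2"])
    fix t :: real assume t: "0 < t" "t \<le> 1"
    then have "0 \<le> t * (- 2 * (\<Sum>a\<in>A. \<delta> a * u a) + t * (\<Sum>a\<in>A. (u a)\<^sup>2))"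
      using assms[OF t] unfolding sum_square_diff_expand by (simp add: power2_eq_square algebra_simps)
    with t show "0 \<le> - 2 * (\<Sum>a\<in>A. \<delta> a * u a) + t * (\<Sum>a\<in>A. (u a)\<^sup>2)"
      by (simp add: zero_le_mult_iff)
  qed
  then show ?thesis by simp
qed

lemma lookup_const_mult: "lookup (single 0 r * p) a = r * lookup p a"
proof -
  have "single 0 r * p = single 0 r * (\<Sum>b\<in>keys p. single b (lookup p b))"
    using poly_mapping_sum_single[of "keys p" p] by simp
  also have "\<dots> = (\<Sum>b\<in>keys p. single b (r * lookup p b))"
    by (simp add: sum_distrib_left mult_single)
  finally show ?thesis by (simp add: lookup_sum lookup_single_if in_keys_iff)
qed

text \<open>Separation of a point from a closed convex cone through the nearest point \<open>q\<close> of the cone: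
  the first-order conditions for \<open>q\<close> along the rays \<open>q + t c\<close> and \<open>(1 - t) q\<close> say that
  \<open>y = q - p\<close> is nonnegative on the cone and vanishes at \<open>q\<close>.\<close>

lemma closed_cone_separation:
  fixes C :: "'v::finite mpoly set"
  assumes C: "closed_in_polys d C" "0 \<in> C"
    and add: "\<And>c c'. c \<in> C \<Longrightarrow> c' \<in> C \<Longrightarrow> c + c' \<in> C"
    and scale: "\<And>c r. c \<in> C \<Longrightarrow> 0 \<le> r \<Longrightarrow> single 0 r * c \<in> C"
    and p: "pdeg p \<le> d" "p \<notin> C"
  obtains y where "\<And>c. c \<in> C \<Longrightarrow> 0 \<le> riesz y c" "riesz y p < 0"
proof -
  define f where "f c = (\<Sum>a\<in>mons d. (lookup p a - lookup c a)\<^sup>2)" for c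
  obtain q where q: "q \<in> C" and q_min: "\<And>c. c \<in> C \<Longrightarrow> f q \<le> f c"
    using closed_in_polys_nearest_point[OF C(1)] C(2) unfolding f_def by blast
  define \<delta> where "\<delta> a = lookup p a - lookup q a" for a
  have fq: "f q = (\<Sum>a\<in>mons d. (\<delta> a)\<^sup>2)" by (simp add: f_def \<delta>_def)
  have C_dual: "(\<Sum>a\<in>mons d. \<delta> a * lookup c a) \<le> 0" if c: "c \<in> C" for c
  proof (rule inner_nonpos_of_local_min)
    fix t :: real assume "0 < t" "t \<le> 1"
    have "f q \<le> f (q + single 0 t * c)" using q c \<open>0 < t\<close> by (intro q_min add scale) auto
    also have "\<dots> = (\<Sum>a\<in>mons d. (\<delta> a - t * lookup c a)\<^sup>2)"
      unfolding f_def \<delta>_def lookup_add lookup_const_mult by (simp add: algebra_simps)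
    finally show "(\<Sum>a\<in>mons d. (\<delta> a)\<^sup>2) \<le> (\<Sum>a\<in>mons d. (\<delta> a - t * lookup c a)\<^sup>2)"
      unfolding fq .
  qed
  have q_orth: "(\<Sum>a\<in>mons d. \<delta> a * - lookup q a) \<le> 0"
  proof (rule inner_nonpos_of_local_min)
    fix t :: real assume "0 < t" "t \<le> 1"
    have "f q \<le> f (single 0 (1 - t) * q)" using q \<open>t \<le> 1\<close> by (intro q_min scale) auto
    also have "\<dots> = (\<Sum>a\<in>mons d. (\<delta> a - t * - lookup q a)\<^sup>2)"
      unfolding f_def \<delta>_def lookup_const_mult by (simp add: algebra_simps)
    finally show "(\<Sum>a\<in>mons d. (\<delta> a)\<^sup>2) \<le> (\<Sum>a\<in>mons d. (\<delta> a - t * - lookup q a)\<^sup>2)"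
      unfolding fq .
  qed
  have keys_C: "keys c \<subseteq> mons d" if "c \<in> C" for c
    using C(1) that by (auto simp: closed_in_polys_def polys_deg_def pdeg_le_iff_keys_subset_mons)
  define y where "y a = - \<delta> a" for a
  have riesz_y: "riesz y c = - (\<Sum>a\<in>mons d. \<delta> a * lookup c a)" if "keys c \<subseteq> mons d" for c
    unfolding y_def riesz_eq_sum_superset[OF finite_mons that] by (simp add: sum_negf mult.commute)
  obtain a0 where a0: "lookup p a0 \<noteq> lookup q a0"
    using p(2) q by (metis poly_mapping_eqI)
  then have "a0 \<in> mons d"
    using p(1) keys_C[OF q] unfolding pdeg_le_iff_keys_subset_mons by (metis in_keys_iff subsetD)
  then have "0 < (\<Sum>a\<in>mons d. \<delta> a * \<delta> a)"
    using a0 finite_mons by (intro sum_pos2[of _ a0]) (auto simp: \<delta>_def zero_less_mult_iff)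
  moreover have "(\<Sum>a\<in>mons d. \<delta> a * lookup p a) =
      (\<Sum>a\<in>mons d. \<delta> a * \<delta> a) + (\<Sum>a\<in>mons d. \<delta> a * lookup q a)"
    unfolding sum.distrib[symmetric] by (intro sum.cong refl) (simp add: \<delta>_def algebra_simps)
  ultimately have "riesz y p < 0"
    using riesz_y p(1) q_orth by (simp add: pdeg_le_iff_keys_subset_mons sum_negf)
  moreover have "0 \<le> riesz y c" if "c \<in> C" for c
    using riesz_y[OF keys_C[OF that]] C_dual[OF that] by simp
  ultimately show thesis using that by blast
qed

definition moment_cond :: "nat \<Rightarrow> 'n::finite option mpoly list \<Rightarrow> (('n option \<Rightarrow>\<^sub>0 nat) \<Rightarrow> real) \<Rightarrow> bool" where
  "moment_cond k gs y \<longleftrightarrow> loc_psd (k - 1) (pvar None) y \<and> loc_zero (k - 1) (sqnorm - 1) y \<and>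
     loc_psd k 1 y \<and> (\<forall>g\<in>set gs. loc_psd (k - kdeg g) (homog g) y)"

lemma Omega_iff:
  "x \<in> Omega k gs \<longleftrightarrow>
    (\<exists>y. riesz y (pvar None) = 1 \<and> (\<forall>i. riesz y (pvar (Some i)) = x $ i) \<and> moment_cond k gs y)"
  unfolding Omega_def moment_cond_def by auto

lemma loc_psd_conic_combination:
  assumes "loc_psd d h y" "loc_psd d h z" "0 \<le> u" "0 \<le> v"
  shows "loc_psd d h (\<lambda>a. u * y a + v * z a)"
  using assms unfolding loc_psd_iff locmat_linear_combination quad_form_linear_combination by simp

lemma loc_zero_linear_combination:
  assumes "loc_zero d h y" "loc_zero d h z"
  shows "loc_zero d h (\<lambda>a. u * y a + v * z a)"
  using assms unfolding loc_zero_def locmat_linear_combination by simp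

lemma moment_cond_conic_combination:
  assumes "moment_cond k gs y" "moment_cond k gs z" "0 \<le> u" "0 \<le> v"
  shows "moment_cond k gs (\<lambda>a. u * y a + v * z a)"
  using assms unfolding moment_cond_def
  by (simp add: loc_psd_conic_combination loc_zero_linear_combination)

lemma convex_Omega:
  fixes gs :: "'n::finite option mpoly list"
  shows "convex (Omega k gs)"
proof (rule convexI)
  fix x x' :: "real ^ 'n" and u v :: real
  assume "x \<in> Omega k gs" "x' \<in> Omega k gs" "0 \<le> u" "0 \<le> v" "u + v = 1"
  then obtain y y' where
    "riesz y (pvar None) = 1" "\<forall>i. riesz y (pvar (Some i)) = x $ i" "moment_cond k gs y"
    "riesz y' (pvar None) = 1" "\<forall>i. riesz y' (pvar (Some i)) = x' $ i" "moment_cond k gs y'"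
    unfolding Omega_iff by blast
  with \<open>0 \<le> u\<close> \<open>0 \<le> v\<close> \<open>u + v = 1\<close> show "u *\<^sub>R x + v *\<^sub>R x' \<in> Omega k gs"
    unfolding Omega_iff
    by (intro exI[of _ "\<lambda>a. u * y a + v * y' a"]) (simp add: riesz_linear_combination moment_cond_conic_combination)
qed

lemma locmat_mon_eval: "locmat h (\<lambda>a. mon_eval a z) a c = mon_eval a z * mon_eval c z * peval h z"
  unfolding locmat_def peval_eq_riesz riesz_def
  by (simp add: mon_eval_add sum_distrib_left mult_ac)

lemma moment_cond_mon_eval:
  fixes gs :: "'n::finite option mpoly list"
  assumes "0 \<le> z None" "peval (sqnorm - 1) z = 0" "\<And>g. g \<in> set gs \<Longrightarrow> 0 \<le> peval (homog g) z"
  shows "moment_cond k gs (\<lambda>a. mon_eval a z)"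
  using assms unfolding moment_cond_def loc_psd_iff loc_zero_def locmat_mon_eval quad_form_rank_one
  by (simp add: peval_pvar peval_one)

text \<open>A point \<open>s\<close> of \<open>S\<close> gives the moment sequence of \<open>(1, s)\<close> rescaled onto the unit sphere.\<close>

lemma exists_point_moment_cond:
  fixes gs :: "'n::finite option mpoly list"
  assumes "semialg gs \<noteq> {}"
  obtains z where "moment_cond k gs (\<lambda>a. mon_eval a z)" "0 < z None"
proof -
  obtain s where s: "s \<in> semialg gs" using assms by blast
  define S where "S = (\<Sum>i\<in>UNIV. (hpt s i)\<^sup>2)"
  have "(hpt s None)\<^sup>2 \<le> S" unfolding S_def by (rule member_le_sum) auto
  then have S: "1 \<le> S" by (simp add: hpt_def)
  define c where "c = 1 / sqrt S"
  have c: "0 < c" "c\<^sup>2 * S = 1" using S by (simp_all add: c_def power_divide)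
  define z where "z i = c * hpt s i" for i
  have "peval sqnorm z = c\<^sup>2 * S"
    by (simp add: peval_sqnorm z_def S_def power_mult_distrib sum_distrib_left)
  then have "peval (sqnorm - 1) z = 0" using c by (simp add: peval_diff peval_one)
  moreover have "0 \<le> peval (homog g) z" if "g \<in> set gs" for g
  proof -
    have "peval (homog g) z = c ^ pdeg g * peval (homog g) (hpt s)"
      unfolding z_def by (rule peval_homogeneous) (rule mdeg_keys_homog)
    then have "peval (homog g) z = c ^ pdeg g * peval g (hpt s)" by (simp add: peval_homog_hpt)
    then show ?thesis using s that c(1) unfolding semialg_def by simp
  qed
  moreover have "0 < z None" using c by (simp add: z_def hpt_def)
  ultimately show thesis using that moment_cond_mon_eval by (metis less_imp_le)
qed

section \<open>The relaxation lies in the modified theta body\<close>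

lemma riesz_qmodule_nonneg_of_moment_cond:
  fixes gs :: "'n::finite option mpoly list"
  assumes X: "\<forall>g\<in>set gs. in_X g" and y: "moment_cond k gs y" and c: "c \<in> qmodule k (Gtilde gs)"
  shows "0 \<le> riesz y c"
proof (rule riesz_qmodule_nonneg[OF _ c])
  fix h qs q
  assume h: "h \<in> set (1 # Gtilde gs)" and q: "q \<in> set qs"
    and deg: "pdeg ((\<Sum>q\<leftarrow>qs. q * q) * h) \<le> 2 * k"
  show "0 \<le> riesz y (q * q * h)"
  proof (cases "q = 0 \<or> h = 0")
    case False
    then have bound: "2 * pdeg q + pdeg h \<le> 2 * k" using pdeg_sos_mult_ge[OF q] deg by force
    from h consider "h = 1" | g where "g \<in> set gs" "h = homog g" | "h = pvar None"
      | "h = sqnorm - 1" | "h = 1 - sqnorm"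
      by (auto simp: Gtilde_def)
    then show ?thesis
    proof cases
      case 1
      with y bound show ?thesis by (intro riesz_square_mult_nonneg) (auto simp: moment_cond_def)
    next
      case (2 g)
      with X bound have "pdeg q \<le> k - kdeg g" by (simp add: pdeg_homog kdeg_def)
      with y 2 show ?thesis by (intro riesz_square_mult_nonneg) (auto simp: moment_cond_def)
    next
      case 3
      with bound have "pdeg q \<le> k - 1" by (simp add: pdeg_pvar)
      with y 3 show ?thesis by (intro riesz_square_mult_nonneg) (auto simp: moment_cond_def)
    next
      case 4
      with bound have "pdeg q \<le> k - 1" by (simp add: pdeg_sqnorm_minus_one)
      with y 4 riesz_square_mult_eq_0[of "k - 1" "sqnorm - 1" y q] show ?thesis
        by (simp add: moment_cond_def)
    next
      case 5
      with bound have "pdeg q \<le> k - 1" by (simp add: pdeg_one_minus_sqnorm)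
      with y riesz_square_mult_eq_0[of "k - 1" "sqnorm - 1" y q]
      have "riesz y (q * q * (sqnorm - 1)) = 0" by (simp add: moment_cond_def)
      moreover have "q * q * h = - (q * q * (sqnorm - 1))" unfolding 5 by (simp add: algebra_simps)
      ultimately show ?thesis by (simp add: riesz_uminus)
    qed
  qed auto
qed

lemma riesz_linform_eq_peval:
  fixes l :: "'n::finite option mpoly"
  assumes "l \<in> linforms" "riesz y (pvar None) = 1" "\<forall>i. riesz y (pvar (Some i)) = x $ i"
  shows "riesz y l = peval l (hpt x)"
proof -
  have "y a = mon_eval a (hpt x)" if "a \<in> keys l" for a
  proof -
    have "mdeg a = 1" using assms(1) that unfolding linforms_def by blast
    then obtain i where "a = single i 1" by (rule mdeg_eq_1_imp_single)
    with assms(2,3) show ?thesis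
      by (cases i) (simp_all add: riesz_pvar mon_eval_single hpt_def)
  qed
  then show ?thesis unfolding peval_eq_riesz riesz_def by simp
qed

lemma Omega_subset_modTH:
  fixes gs :: "'n::finite option mpoly list"
  assumes "\<forall>g\<in>set gs. in_X g"
  shows "Omega k gs \<subseteq> modTH k (Gtilde gs)"
proof
  fix x assume "x \<in> Omega k gs"
  then obtain y where y: "riesz y (pvar None) = 1" "\<forall>i. riesz y (pvar (Some i)) = x $ i"
    "moment_cond k gs y"
    unfolding Omega_iff by blast
  have "0 \<le> peval l (hpt x)" if "l \<in> qmodule k (Gtilde gs)" "l \<in> linforms" for l
    using riesz_qmodule_nonneg_of_moment_cond[OF assms y(3) that(1)] riesz_linform_eq_peval[OF that(2) y(1,2)]
    by simp
  then show "x \<in> modTH k (Gtilde gs)" unfolding modTH_def by blast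
qed

lemma closed_modTH:
  fixes G :: "'n::finite option mpoly list"
  shows "closed (modTH k G)"
proof -
  have "continuous_on UNIV (\<lambda>x :: real ^ 'n. hpt x i)" for i
    by (cases i) (auto simp: hpt_def intro: continuous_intros)
  then have "continuous_on UNIV (\<lambda>x :: real ^ 'n. peval l (hpt x))" for l
    unfolding peval_def by (intro continuous_intros)
  then have "closed (\<Inter>l\<in>qmodule k G \<inter> linforms. {x :: real ^ 'n. 0 \<le> peval l (hpt x)})"
    by (intro closed_INT ballI closed_Collect_le continuous_on_const)
  moreover have "modTH k G = (\<Inter>l\<in>qmodule k G \<inter> linforms. {x. 0 \<le> peval l (hpt x)})"
    unfolding modTH_def by auto
  ultimately show ?thesis by simp
qed

section \<open>The modified theta body lies in the closure of the relaxation\<close>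

lemma loc_psd_of_riesz_qmodule_nonneg:
  fixes G :: "'v::finite mpoly list"
  assumes "\<And>c. c \<in> qmodule k G \<Longrightarrow> 0 \<le> riesz y c" "h \<in> set (1 # G)" "2 * d + pdeg h \<le> 2 * k"
  shows "loc_psd d h y"
  unfolding loc_psd_iff
proof
  fix v :: "('v \<Rightarrow>\<^sub>0 nat) \<Rightarrow> real"
  define q where "q = (\<Sum>a\<in>mons d. single a (v a))"
  have keys_q: "keys q \<subseteq> mons d" unfolding q_def by (rule keys_sum_single_subset)
  then have "pdeg (q * q * h) \<le> 2 * k"
    using pdeg_mult_le[of "q * q" h] pdeg_mult_le[of q q] assms(3)
    by (simp add: pdeg_le_iff_keys_subset_mons[symmetric])
  then have "0 \<le> riesz y (q * q * h)" by (intro assms(1) square_mult_in_qmodule assms(2))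
  also have "riesz y (q * q * h) = quad_form (mons d) (locmat h y) v"
    unfolding riesz_square_mult[OF finite_mons keys_q] quad_form_def
    by (intro sum.cong refl) (simp add: q_def lookup_sum_single finite_mons)
  finally show "0 \<le> quad_form (mons d) (locmat h y) v" .
qed

lemma moment_cond_of_riesz_qmodule_nonneg:
  fixes gs :: "'n::finite option mpoly list"
  assumes X: "\<forall>g\<in>set gs. in_X g" and k: "1 \<le> k" "\<forall>g\<in>set gs. kdeg g \<le> k"
    and y: "\<And>c. c \<in> qmodule k (Gtilde gs) \<Longrightarrow> 0 \<le> riesz y c"
  shows "moment_cond k gs y"
proof -
  note dual = loc_psd_of_riesz_qmodule_nonneg[OF y]
  have "loc_psd (k - 1) (pvar None) y" "loc_psd k 1 y"
    using k by (auto intro!: dual simp: Gtilde_def pdeg_pvar)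
  moreover have "loc_psd (k - kdeg g) (homog g) y" if "g \<in> set gs" for g
    using that X k by (intro dual) (auto simp: Gtilde_def pdeg_homog kdeg_def)
  moreover have psd: "loc_psd (k - 1) (sqnorm - 1) y" "loc_psd (k - 1) (1 - sqnorm) y"
    using k by (auto intro!: dual simp: Gtilde_def pdeg_sqnorm_minus_one pdeg_one_minus_sqnorm)
  have "quad_form (mons (k - 1)) (locmat (sqnorm - 1) y) v = 0" for v
  proof -
    have "locmat (1 - sqnorm) y a c = - locmat (sqnorm - 1) y a c" for a c
      by (metis locmat_uminus minus_diff_eq)
    then have "quad_form (mons (k - 1)) (locmat (1 - sqnorm) y) v =
        - quad_form (mons (k - 1)) (locmat (sqnorm - 1) y) v"
      unfolding quad_form_def by (simp add: sum_negf)
    moreover have "0 \<le> quad_form (mons (k - 1)) (locmat (sqnorm - 1) y) v"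
      "0 \<le> quad_form (mons (k - 1)) (locmat (1 - sqnorm) y) v"
      using psd unfolding loc_psd_iff by blast+
    ultimately show ?thesis by linarith
  qed
  then have "loc_zero (k - 1) (sqnorm - 1) y"
    unfolding loc_zero_def
    using symmetric_quad_form_eq_0[OF finite_mons, of "locmat (sqnorm - 1) y"] locmat_symmetric by blast
  ultimately show ?thesis unfolding moment_cond_def by blast
qed

definition affine_form :: "real \<Rightarrow> real ^ 'n \<Rightarrow> 'n::finite option mpoly" where
  "affine_form b a = single (single None 1) (- b) + (\<Sum>i\<in>UNIV. single (single (Some i) 1) (a $ i))"

lemma affine_form_linforms:
  fixes a :: "real ^ 'n::finite"
  shows "affine_form b a \<in> linforms"
proof -
  have "keys (\<Sum>i\<in>UNIV. single (single (Some i) 1) (a $ i) :: 'n option mpoly) \<subseteq>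
      range (\<lambda>i. single (Some i) 1)"
    using keys_sum[of "\<lambda>i. single (single (Some i) 1) (a $ i) :: 'n option mpoly" UNIV] by auto
  moreover have "keys (single (single None 1) (- b) :: 'n option mpoly) \<subseteq> {single None 1}"
    by simp
  ultimately have "keys (affine_form b a) \<subseteq> insert (single None 1) (range (\<lambda>i. single (Some i) 1))"
    using keys_add[of "single (single None 1) (- b)" "\<Sum>i\<in>UNIV. single (single (Some i) 1) (a $ i)"]
    unfolding affine_form_def by blast
  then show ?thesis unfolding linforms_def by auto
qed

lemma pdeg_affine_form_le: "pdeg (affine_form b a) \<le> 1"
  using affine_form_linforms[of b a] unfolding linforms_def pdeg_le_iff by auto

lemma peval_affine_form: "peval (affine_form b a) (hpt x) = inner a x - b"
  by (simp add: affine_form_def peval_eq_riesz riesz_add riesz_sum riesz_single mon_eval_single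
      hpt_def inner_vec_def)

text \<open>Normalizing the perturbation \<open>y + t y\<^sub>0\<close> by a moment sequence \<open>y\<^sub>0\<close> of a point with
  \<open>X\<^sub>0 > 0\<close> produces points of \<open>\<Omega>\<^sub>k\<close> for every \<open>t > 0\<close>; letting \<open>t \<rightarrow> 0\<close> transfers
  nonnegativity of a linear form from \<open>\<Omega>\<^sub>k\<close> to \<open>y\<close>.\<close>

lemma riesz_linform_nonneg_of_moment_cond:
  fixes gs :: "'n::finite option mpoly list"
  assumes S: "semialg gs \<noteq> {}"
    and y: "moment_cond k gs y" "0 \<le> riesz y (pvar None)"
    and l: "l \<in> linforms" "\<And>x. x \<in> Omega k gs \<Longrightarrow> 0 \<le> peval l (hpt x)"
  shows "0 \<le> riesz y l"
proof -
  obtain z where z: "moment_cond k gs (\<lambda>a. mon_eval a z)" "0 < z None"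
    using exists_point_moment_cond[OF S] by blast
  define y0 where "y0 a = mon_eval a z" for a
  have y0_X0: "riesz y0 (pvar None) = z None" by (simp add: y0_def riesz_pvar mon_eval_single)
  show ?thesis
  proof (rule nonneg_of_nonneg_perturbations[where B = "riesz y0 l"])
    fix t :: real assume t: "0 < t" "t \<le> 1"
    define c where "c = riesz y (pvar None) + t * z None"
    have c: "0 < c" using y(2) z(2) t by (simp add: c_def add_nonneg_pos)
    define w where "w a = (1 / c) * y a + (t / c) * y0 a" for a
    have riesz_w: "riesz w p = (riesz y p + t * riesz y0 p) / c" for p
      unfolding w_def riesz_linear_combination by (simp add: add_divide_distrib)
    have "moment_cond k gs w"
      unfolding w_def y0_def using y(1) z(1) c t by (intro moment_cond_conic_combination) auto
    moreover have "riesz w (pvar None) = 1"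
      using c unfolding riesz_w y0_X0 c_def by simp
    ultimately have "(\<chi> i. riesz w (pvar (Some i))) \<in> Omega k gs"
      unfolding Omega_iff by auto
    moreover have "riesz w l = peval l (hpt (\<chi> i. riesz w (pvar (Some i))))"
      by (rule riesz_linform_eq_peval[OF l(1) \<open>riesz w (pvar None) = 1\<close>]) simp
    ultimately have "0 \<le> riesz w l" using l(2) by simp
    then show "0 \<le> riesz y l + t * riesz y0 l"
      using c unfolding riesz_w by (simp add: zero_le_divide_iff)
  qed
qed

lemma modTH_subset_closure_Omega:
  fixes gs :: "'n::finite option mpoly list"
  assumes X: "\<forall>g\<in>set gs. in_X g" and S: "semialg gs \<noteq> {}"
    and k: "1 \<le> k" "\<forall>g\<in>set gs. kdeg g \<le> k"
    and closed: "closed_in_polys (2 * k) (qmodule k (Gtilde gs))"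
  shows "modTH k (Gtilde gs) \<subseteq> closure (Omega k gs)"
proof
  fix x assume x: "x \<in> modTH k (Gtilde gs)"
  show "x \<in> closure (Omega k gs)"
  proof (rule ccontr)
    assume "x \<notin> closure (Omega k gs)"
    then obtain a b where ab: "inner a x < b" "\<forall>z\<in>closure (Omega k gs). b < inner a z"
      using separating_hyperplane_closed_point[OF convex_closure[OF convex_Omega] closed_closure]
      by blast
    define l where "l = affine_form b a"
    have "l \<notin> qmodule k (Gtilde gs)"
    proof
      assume "l \<in> qmodule k (Gtilde gs)"
      then have "0 \<le> peval l (hpt x)"
        using x affine_form_linforms unfolding modTH_def l_def by blast
      with ab(1) show False by (simp add: l_def peval_affine_form)
    qed
    moreover have "pdeg l \<le> 2 * k" using pdeg_affine_form_le[of b a] k(1) by (simp add: l_def)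
    ultimately obtain y where y: "\<And>c. c \<in> qmodule k (Gtilde gs) \<Longrightarrow> 0 \<le> riesz y c"
      and l_neg: "riesz y l < 0"
      using closed_cone_separation[OF closed zero_in_qmodule qmodule_add qmodule_const_mult] by blast
    have "pvar None \<in> qmodule k (Gtilde gs)"
      using square_mult_in_qmodule[of "pvar None" "Gtilde gs" 1 k] k(1)
      by (simp add: Gtilde_def pdeg_pvar)
    then have "0 \<le> riesz y (pvar None)" by (rule y)
    moreover have "0 \<le> peval l (hpt z)" if "z \<in> Omega k gs" for z
      using ab(2) that closure_subset by (fastforce simp: l_def peval_affine_form)
    ultimately have "0 \<le> riesz y l"
      using riesz_linform_nonneg_of_moment_cond[OF S moment_cond_of_riesz_qmodule_nonneg[OF X k y]]
        affine_form_linforms unfolding l_def by blast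
    with l_neg show False by simp
  qed
qed

theorem mainTheorem13:
  fixes gs :: "'n::finite option mpoly list" and k :: nat
  assumes "\<forall>g\<in>set gs. in_X g"
    and "semialg gs \<noteq> {}"
    and "k \<ge> 1" and "\<forall>g\<in>set gs. k \<ge> kdeg g"
    and "closed_in_polys (2 * k) (qmodule k (Gtilde gs))"
  shows "modTH k (Gtilde gs) = closure (Omega k gs)"
proof
  show "modTH k (Gtilde gs) \<subseteq> closure (Omega k gs)"
    using modTH_subset_closure_Omega assms by blast
  show "closure (Omega k gs) \<subseteq> modTH k (Gtilde gs)"
    using closure_minimal[OF Omega_subset_modTH[OF assms(1)] closed_modTH] .
qed

end
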